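(* Let $N_1=(S_1,T_1,F_1,M_{0,1},\ell)$ and $N_2=(S_2,T_2,F_2,M_{0,2},\ell_2)$ be two Petri nets, $N_2$ being plain; let $\mathfrak M_1,\mathfrak M_1'$ be ST-markings of $N_1$ and $\mathfrak M_2,\mathfrak M_2'$ ST-markings of $N_2$, and let $\eta,\eta'\in\mathrm{Act}^\pm\cup\{\tau\}$. If $\ell(\mathfrak M_2)=\ell(\mathfrak M_1)$, $\mathfrak M_1\xrightarrow{\eta}\mathfrak M_1'$ and $\mathfrak M_2\xrightarrow{(\eta')}\mathfrak M_2'$ with $\overline{\eta'}=\overline{\eta}$, then there is an ST-marking $\mathfrak M_2''$ of $N_2$ with $\mathfrak M_2\xrightarrow{(\eta)}\mathfrak M_2''$, $\ell(\mathfrak M_2'')=\ell(\mathfrak M_1')$ and $\overline{\mathfrak M_2''}=\overline{\mathfrak M_2'}$.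
   Context: Fix visible actions $\mathrm{Act}$ and $\tau\notin\mathrm{Act}$. A Petri net $(S,T,F,M_0,\ell)$ has disjoint $S,T$, $F:(S\times T)\cup(T\times S)\to\mathbb N$, $M_0\in\mathbb N^S$, $\ell:T\to\mathrm{Act}\cup\{\tau\}$; ${}^\bullet t(s)=F(s,t)$, $t^\bullet(s)=F(t,s)$; $M[t\rangle M'$ iff ${}^\bullet t\le M$ and $M'=M-{}^\bullet t+t^\bullet$. Plain: $\ell$ injective and never $\tau$. $\mathrm{Act}^\pm=\{a^+,a^{-n}\mid a\in\mathrm{Act},n>0\}$. An ST-marking is $(M,U)\in\mathbb N^S\times T^*$. Transitions: $(M,U)\xrightarrow{a^+}(M-{}^\bullet t,Ut)$ iff $\ell(t)=a$ and $M[t\rangle$; $(M,U)\xrightarrow{a^{-n}}(M+t^\bullet,U^{-n})$ iff the $n$-th element $t$ of $U$ has $\ell(t)=a$, $U^{-n}$ being $U$ with its $n$-th element removed; $(M,U)\xrightarrow{\tau}(M',U)$ iff $M[t\rangle M'$ with $\ell(t)=\tau$. $\mathfrak M\xrightarrow{(\eta)}\mathfrak M'$ means $\mathfrak M\xrightarrow{\eta}\mathfrak M'$ or ($\eta=\tau$ and $\mathfrak M=\mathfrak M'$). For $\mathfrak M=(M,t_1\cdots t_k)$, $\ell(\mathfrak M)=\ell(t_1)\cdots\ell(t_k)$ (a word) and $\overline{\mathfrak M}=(M,\overline U)$ where $\overline U(t)$ is the number of occurrences of $t$ in $U=t_1\cdots t_k$. Also $\overline{a^+}=a^+$, $\overline{a^{-n}}=a^-$,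 $\overline\tau=\tau$. *)

theory Defs
  imports Main "HOL-Library.Multiset"
begin

text \<open>Petri nets with place type 's and transition type 't (so S and T are disjoint
  by construction). The flow function F is split into its two parts
  F(s,t) = flow_in N s t and F(t,s) = flow_out N t s. Labels are 'a option,
  None standing for the invisible action tau.\<close>

record ('s, 't, 'a) petri_net =
  flow_in  :: "'s \<Rightarrow> 't \<Rightarrow> nat"
  flow_out :: "'t \<Rightarrow> 's \<Rightarrow> nat"
  initial  :: "'s \<Rightarrow> nat"
  lab      :: "'t \<Rightarrow> 'a option"

definition preset :: "('s, 't, 'a) petri_net \<Rightarrow> 't \<Rightarrow> 's \<Rightarrow> nat" where
  "preset N t = (\<lambda>s. flow_in N s t)"

definition postset :: "('s, 't, 'a) petri_net \<Rightarrow> 't \<Rightarrow> 's \<Rightarrow> nat" where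
  "postset N t = (\<lambda>s. flow_out N t s)"

definition plain :: "('s, 't, 'a) petri_net \<Rightarrow> bool" where
  "plain N \<longleftrightarrow> inj (lab N) \<and> (\<forall>t. lab N t \<noteq> None)"

text \<open>Elements of Act^\<plusminus> \<union> {tau}: a^+, a^{-n}, tau.\<close>
datatype 'a st_action = Plus 'a | Minus 'a nat | Tau

datatype 'a bar_action = BPlus 'a | BMinus 'a | BTau

fun bar_act :: "'a st_action \<Rightarrow> 'a bar_action" where
  "bar_act (Plus a) = BPlus a"
| "bar_act (Minus a n) = BMinus a"
| "bar_act Tau = BTau"

type_synonym ('s, 't) st_marking = "('s \<Rightarrow> nat) \<times> 't list"

text \<open>U^{-n}: U with its n-th element (1-indexed) removed.\<close>
definition remove_nth :: "'t list \<Rightarrow> nat \<Rightarrow> 't list" where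
  "remove_nth U n = take (n - 1) U @ drop n U"

fun st_step :: "('s, 't, 'a) petri_net \<Rightarrow> ('s, 't) st_marking \<Rightarrow> 'a st_action
                \<Rightarrow> ('s, 't) st_marking \<Rightarrow> bool" where
  "st_step N (M, U) (Plus a) (M', U') \<longleftrightarrow>
     (\<exists>t. lab N t = Some a \<and> (\<forall>s. preset N t s \<le> M s)
          \<and> M' = (\<lambda>s. M s - preset N t s) \<and> U' = U @ [t])"
| "st_step N (M, U) (Minus a n) (M', U') \<longleftrightarrow>
     (0 < n \<and> n \<le> length U \<and> lab N (U ! (n - 1)) = Some a
          \<and> M' = (\<lambda>s. M s + postset N (U ! (n - 1)) s) \<and> U' = remove_nth U n)"
| "st_step N (M, U) Tau (M', U') \<longleftrightarrow>
     (\<exists>t. lab N t = None \<and> (\<forall>s. preset N t s \<le> M s)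
          \<and> M' = (\<lambda>s. M s - preset N t s + postset N t s) \<and> U' = U)"

definition st_step_opt :: "('s, 't, 'a) petri_net \<Rightarrow> ('s, 't) st_marking \<Rightarrow> 'a st_action
                \<Rightarrow> ('s, 't) st_marking \<Rightarrow> bool" where
  "st_step_opt N X e Y \<longleftrightarrow> st_step N X e Y \<or> (e = Tau \<and> X = Y)"

definition st_label :: "('s, 't, 'a) petri_net \<Rightarrow> ('s, 't) st_marking \<Rightarrow> 'a option list" where
  "st_label N X = map (lab N) (snd X)"

definition st_bar :: "('s, 't) st_marking \<Rightarrow> ('s \<Rightarrow> nat) \<times> 't multiset" where
  "st_bar X = (fst X, mset (snd X))"

end

theory Submission
  imports Defs
begin

text \<open>Transitions change the label word of an ST-marking in a way that depends only on the
  action: a tau step keeps it, a^+ appends a, and a^{-n} deletes the n-th letter. So the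
  label word of N2 tracks that of N1 as soon as N2 can perform the same action. Only the
  a^{-n} case needs an argument: N2 performed some a^{-m} instead, but in a plain net all
  current occurrences of a-labelled transitions are the same transition, so a^{-n} is
  also possible and removes the same transition, giving the same multiset.\<close>

lemma map_remove_nth: "map f (remove_nth U n) = remove_nth (map f U) n"
  by (simp add: remove_nth_def take_map drop_map)

lemma mset_remove_nth:
  assumes "0 < n" "n \<le> length U"
  shows "mset (remove_nth U n) = mset U - {#U ! (n - 1)#}"
proof -
  have "U = take (n - 1) U @ U ! (n - 1) # drop n U"
    using assms id_take_nth_drop[of "n - 1" U] by simp
  then have "mset U = mset (remove_nth U n) + {#U ! (n - 1)#}"
    by (metis add_mset_add_single mset.simps(2) mset_append remove_nth_def union_assoc union_commute)
  then show ?thesis by simp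
qed

lemma st_step_Tau_label: "st_step N X Tau X' \<Longrightarrow> st_label N X' = st_label N X"
  by (cases X; cases X') (auto simp: st_label_def)

lemma st_step_Plus_label:
  "st_step N X (Plus a) X' \<Longrightarrow> st_label N X' = st_label N X @ [Some a]"
  by (cases X; cases X') (auto simp: st_label_def)

lemma st_step_Minus_label:
  "st_step N X (Minus a n) X' \<Longrightarrow> st_label N X' = remove_nth (st_label N X) n"
  by (cases X; cases X') (auto simp: st_label_def map_remove_nth)

lemma st_step_Minus_index:
  "st_step N X (Minus a n) X' \<Longrightarrow> 0 < n \<and> n \<le> length (st_label N X) \<and> st_label N X ! (n - 1) = Some a"
  by (cases X; cases X') (auto simp: st_label_def)

lemma plain_no_Tau_step: "plain N \<Longrightarrow> \<not> st_step N X Tau Y"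
  by (cases X; cases Y) (auto simp: plain_def)

lemma plain_st_step_Minus_reindex:
  assumes "plain N"
    and step: "st_step N X (Minus a m) X'"
    and n: "0 < n" "n \<le> length (st_label N X)" "st_label N X ! (n - 1) = Some a"
  shows "\<exists>X''. st_step N X (Minus a n) X'' \<and> st_bar X'' = st_bar X'"
proof -
  obtain M U where X: "X = (M, U)" by fastforce
  obtain M' U' where X': "X' = (M', U')" by fastforce
  have m: "0 < m" "m \<le> length U" "lab N (U ! (m - 1)) = Some a"
    and M': "M' = (\<lambda>s. M s + postset N (U ! (m - 1)) s)" and U': "U' = remove_nth U m"
    using step by (simp_all add: X X')
  have n': "n \<le> length U" "lab N (U ! (n - 1)) = Some a"
    using n by (simp_all add: X st_label_def)
  then have "lab N (U ! (n - 1)) = lab N (U ! (m - 1))"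
    using m(3) by simp
  then have same: "U ! (n - 1) = U ! (m - 1)"
    using \<open>plain N\<close> unfolding plain_def by (blast dest: injD)
  let ?X'' = "((\<lambda>s. M s + postset N (U ! (n - 1)) s), remove_nth U n)"
  have "st_step N X (Minus a n) ?X''"
    using n(1) n' by (simp add: X)
  moreover have "st_bar ?X'' = st_bar X'"
    using n(1) n'(1) m same by (simp add: X' M' U' st_bar_def mset_remove_nth)
  ultimately show ?thesis by blast
qed

theorem lemma3p11:
  fixes N1 :: "('s1, 't1, 'a) petri_net" and N2 :: "('s2, 't2, 'a) petri_net"
    and M1 M1' :: "('s1, 't1) st_marking" and M2 M2' :: "('s2, 't2) st_marking"
    and \<eta> \<eta>' :: "'a st_action"
  assumes "plain N2"
    and "st_label N2 M2 = st_label N1 M1"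
    and "st_step N1 M1 \<eta> M1'"
    and "st_step_opt N2 M2 \<eta>' M2'"
    and "bar_act \<eta>' = bar_act \<eta>"
  shows "\<exists>M2''. st_step_opt N2 M2 \<eta> M2'' \<and> st_label N2 M2'' = st_label N1 M1'
                \<and> st_bar M2'' = st_bar M2'"
proof (cases \<eta>)
  case Tau
  with assms(5) have "\<eta>' = Tau" by (cases \<eta>') simp_all
  with assms(1,4) have "M2' = M2" by (auto simp: st_step_opt_def dest: plain_no_Tau_step)
  moreover have "st_label N1 M1' = st_label N1 M1"
    using assms(3) Tau by (simp add: st_step_Tau_label)
  ultimately show ?thesis
    using assms(2) Tau by (intro exI[of _ M2]) (simp add: st_step_opt_def)
next
  case (Plus a)
  with assms(4,5) have "st_step N2 M2 (Plus a) M2'"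
    by (cases \<eta>') (simp_all add: st_step_opt_def)
  moreover have "st_label N2 M2' = st_label N1 M1'"
    using assms(2) st_step_Plus_label[OF assms(3)[unfolded Plus]]
      st_step_Plus_label[OF \<open>st_step N2 M2 (Plus a) M2'\<close>] by simp
  ultimately show ?thesis
    using Plus unfolding st_step_opt_def by blast
next
  case (Minus a n)
  with assms(4,5) obtain m where "st_step N2 M2 (Minus a m) M2'"
    by (cases \<eta>') (auto simp: st_step_opt_def)
  then obtain M2'' where step: "st_step N2 M2 (Minus a n) M2''" and "st_bar M2'' = st_bar M2'"
    using plain_st_step_Minus_reindex[OF assms(1)] st_step_Minus_index[OF assms(3)[unfolded Minus]]
      assms(2) by metis
  moreover have "st_label N2 M2'' = st_label N1 M1'"
    using assms(2) st_step_Minus_label[OF assms(3)[unfolded Minus]] st_step_Minus_label[OF step]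
    by simp
  ultimately show ?thesis
    using Minus unfolding st_step_opt_def by blast
qed

end
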